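(* Let $A$ be a system of $n_A$ qubits and $B$ a system of $n_B$ qubits, let $\rho_{A_1B_1}$ be a state at time $t_1$, and let $\mathcal{P}$ be a CPTP map from $AB$ at time $t_1$ to $AB$ at time $t_2$. Let $R_{A_1B_1A_2B_2}$ be the two-time pseudo-density matrix of the full system $AB$ and $R_{A_1B_2}$ the pseudo-density matrix constructed from measurements on $A$ at $t_1$ and on $B$ at $t_2$ (both defined in the context). Then $R_{A_1B_2}=\mathrm{Tr}_{B_1A_2}R_{A_1B_1A_2B_2}$.
   Context: Pauli matrices $\sigma_0=\mathbb{1},\sigma_1,\sigma_2,\sigma_3$; multi-qubit Pauli matrices are tensor products of these. The coarse-grained measurement of a Pauli matrix $\Sigma$ on $AB$ is $\{(\mathbb{1}\pm\Sigma)/2\}$ with outcomes $\pm1$ and Lüders update $\rho\mapsto P_\pm\rho P_\pm$. For Paulis $\Sigma_1,\Sigma_2$ on $AB$, $\langle\Sigma_1,\Sigma_2\rangle$ is the expected product of outcomes in: prepare $\rho_{A_1B_1}$, coarse-grained measurement of $\Sigma_1$ at $t_1$, apply $\mathcal{P}$, coarse-grained measurement of $\Sigma_2$ at $t_2$. Then $R_{A_1B_1A_2B_2}=2^{-2(n_A+n_B)}\sum \langle\sigma_i^{A}\otimes\sigma_j^{B},\sigma_k^{A}\otimes\sigma_l^{B}\rangle\,\sigma_i^{A_1}\otimes\sigma_j^{B_1}\otimes\sigma_k^{A_2}\otimes\sigma_l^{B_2}$ (sum over all multi-qubit Paulis $\sigma_i,\sigma_k$ on $A$ and $\sigma_j,\sigma_l$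 on $B$), and $R_{A_1B_2}=2^{-(n_A+n_B)}\sum_{i,l}\langle\sigma_i^A\otimes\mathbb{1}_B,\mathbb{1}_A\otimes\sigma_l^B\rangle\,\sigma_i^{A_1}\otimes\sigma_l^{B_2}$. *)

theory Defs
  imports Complex_Main "Jordan_Normal_Form.Matrix"
begin

definition tr :: "complex mat \<Rightarrow> complex" where
  "tr M = (\<Sum>i<dim_row M. M $$ (i, i))"

text \<open>Kronecker (tensor) product, standard ordering: row index of A is the
  more significant digit, i.e. (A \<otimes> B)(a*rB+b, a'*cB+b') = A(a,a') B(b,b').\<close>
definition kron :: "complex mat \<Rightarrow> complex mat \<Rightarrow> complex mat" where
  "kron A B = mat (dim_row A * dim_row B) (dim_col A * dim_col B)
     (\<lambda>(i, j). A $$ (i div dim_row B, j div dim_col B) * B $$ (i mod dim_row B, j mod dim_col B))"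

definition psd :: "nat \<Rightarrow> complex mat \<Rightarrow> bool" where
  "psd d M \<longleftrightarrow> M \<in> carrier_mat d d \<and>
     (\<forall>v \<in> carrier_vec d. let q = (\<Sum>i<d. cnj (v $ i) * (M *\<^sub>v v) $ i) in Im q = 0 \<and> 0 \<le> Re q)"

definition density :: "nat \<Rightarrow> complex mat \<Rightarrow> bool" where
  "density d \<rho> \<longleftrightarrow> psd d \<rho> \<and> tr \<rho> = 1"

text \<open>(id_k \<otimes> \<Phi>) applied to a (k*d) x (k*d) matrix, acting blockwise.\<close>
definition ampl :: "nat \<Rightarrow> nat \<Rightarrow> (complex mat \<Rightarrow> complex mat) \<Rightarrow> complex mat \<Rightarrow> complex mat" where
  "ampl k d \<Phi> X = mat (k * d) (k * d)
     (\<lambda>(i, j). \<Phi> (mat d d (\<lambda>(r, c). X $$ (i div d * d + r, j div d * d + c))) $$ (i mod d, j mod d))"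

definition cptp :: "nat \<Rightarrow> (complex mat \<Rightarrow> complex mat) \<Rightarrow> bool" where
  "cptp d \<Phi> \<longleftrightarrow>
     (\<forall>X \<in> carrier_mat d d. \<Phi> X \<in> carrier_mat d d) \<and>
     (\<forall>X \<in> carrier_mat d d. \<forall>Y \<in> carrier_mat d d. \<Phi> (X + Y) = \<Phi> X + \<Phi> Y) \<and>
     (\<forall>X \<in> carrier_mat d d. \<forall>c. \<Phi> (c \<cdot>\<^sub>m X) = c \<cdot>\<^sub>m \<Phi> X) \<and>
     (\<forall>X \<in> carrier_mat d d. tr (\<Phi> X) = tr X) \<and>
     (\<forall>k>0. \<forall>X. psd (k * d) X \<longrightarrow> psd (k * d) (ampl k d \<Phi> X))"

definition sigma :: "nat \<Rightarrow> complex mat" where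
  "sigma k = (if k = 1 then mat_of_rows_list 2 [[0, 1], [1, 0]]
     else if k = 2 then mat_of_rows_list 2 [[0, -\<i>], [\<i>, 0]]
     else if k = 3 then mat_of_rows_list 2 [[1, 0], [0, -1]]
     else 1\<^sub>m 2)"

definition pauli_strings :: "nat \<Rightarrow> nat list set" where
  "pauli_strings n = {ps. length ps = n \<and> set ps \<subseteq> {0..<4}}"

definition pauli :: "nat list \<Rightarrow> complex mat" where
  "pauli ps = foldr (\<lambda>k M. kron (sigma k) M) ps (1\<^sub>m 1)"

abbreviation idp :: "nat \<Rightarrow> nat list" where
  "idp n \<equiv> replicate n 0"

text \<open>Projector (1 + s \<Sigma>)/2 for outcome s = +1/-1.\<close>
definition cg_proj :: "nat \<Rightarrow> complex mat \<Rightarrow> int \<Rightarrow> complex mat" where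
  "cg_proj d S s = (1 / 2 :: complex) \<cdot>\<^sub>m (1\<^sub>m d + of_int s \<cdot>\<^sub>m S)"

text \<open>Expected product of outcomes: prepare \<rho>, coarse-grained measurement of S1
  (Lueders update), apply \<Phi>, coarse-grained measurement of S2.\<close>
definition corr :: "nat \<Rightarrow> complex mat \<Rightarrow> (complex mat \<Rightarrow> complex mat) \<Rightarrow> complex mat \<Rightarrow> complex mat \<Rightarrow> complex" where
  "corr d \<rho> \<Phi> S1 S2 = (\<Sum>s1\<in>{1, -1::int}. \<Sum>s2\<in>{1, -1::int}.
      of_int (s1 * s2) *
      tr (cg_proj d S2 s2 * \<Phi> (cg_proj d S1 s1 * \<rho> * cg_proj d S1 s1) * cg_proj d S2 s2))"

definition pAB :: "nat list \<Rightarrow> nat list \<Rightarrow> complex mat" where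
  "pAB i j = kron (pauli i) (pauli j)"

text \<open>Two-time PDM on A1 B1 A2 B2 (tensor order A1, B1, A2, B2).\<close>
definition R4 :: "nat \<Rightarrow> nat \<Rightarrow> complex mat \<Rightarrow> (complex mat \<Rightarrow> complex mat) \<Rightarrow> complex mat" where
  "R4 nA nB \<rho> \<Phi> = (let D = 2 ^ nA * 2 ^ nB in
     mat (D * D) (D * D) (\<lambda>(r, c).
       (1 / 2 ^ (2 * (nA + nB))) *
       (\<Sum>i\<in>pauli_strings nA. \<Sum>j\<in>pauli_strings nB. \<Sum>k\<in>pauli_strings nA. \<Sum>l\<in>pauli_strings nB.
          corr D \<rho> \<Phi> (pAB i j) (pAB k l) *
          kron (kron (kron (pauli i) (pauli j)) (pauli k)) (pauli l) $$ (r, c))))"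

text \<open>PDM on A1 B2 from measurements of A at t1 and B at t2 (tensor order A1, B2).\<close>
definition R2 :: "nat \<Rightarrow> nat \<Rightarrow> complex mat \<Rightarrow> (complex mat \<Rightarrow> complex mat) \<Rightarrow> complex mat" where
  "R2 nA nB \<rho> \<Phi> = (let D = 2 ^ nA * 2 ^ nB in
     mat D D (\<lambda>(r, c).
       (1 / 2 ^ (nA + nB)) *
       (\<Sum>i\<in>pauli_strings nA. \<Sum>l\<in>pauli_strings nB.
          corr D \<rho> \<Phi> (pAB i (idp nB)) (pAB (idp nA) l) *
          kron (pauli i) (pauli l) $$ (r, c))))"

text \<open>Partial trace over the middle factor Y of X \<otimes> Y \<otimes> Z (dimensions dX, dY, dZ).\<close>
definition ptrace_mid :: "nat \<Rightarrow> nat \<Rightarrow> nat \<Rightarrow> complex mat \<Rightarrow> complex mat" where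
  "ptrace_mid dX dY dZ M = mat (dX * dZ) (dX * dZ) (\<lambda>(i, j).
     \<Sum>y<dY. M $$ ((i div dZ * dY + y) * dZ + i mod dZ, (j div dZ * dY + y) * dZ + j mod dZ))"

end

theory Submission
  imports Defs
begin

(* Tracing out the middle factor of a Kronecker product X \<otimes> Y \<otimes> Z leaves tr Y \<cdot> (X \<otimes> Z), and
   this partial trace is linear. Applied to the Pauli expansion of R4 it replaces each term
   \<sigma>_i \<otimes> \<sigma>_j \<otimes> \<sigma>_k \<otimes> \<sigma>_l by tr \<sigma>_j tr \<sigma>_k (\<sigma>_i \<otimes> \<sigma>_l). A Pauli string is traceless unless it is the
   identity, whose trace is the dimension, so only the terms with j = k = 0 survive; they carry the
   factor 2^(nA+nB), which turns the normalisation of R4 into that of R2, and their coefficients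
   are exactly the correlations defining R2. *)

lemma sum_lessThan_mult_nat:
  fixes a b :: nat
  shows "(\<Sum>i<a * b. g i) = (\<Sum>p<a. \<Sum>q<b. g (p * b + q))"
proof -
  have "(\<Sum>i<a * b. g i) = (\<Sum>p<a. sum g {p * b..<p * b + b})"
    using sum.nat_group[of g b a] by simp
  also have "\<dots> = (\<Sum>p<a. \<Sum>q<b. g (p * b + q))"
  proof (rule sum.cong[OF refl])
    fix p
    show "sum g {p * b..<p * b + b} = (\<Sum>q<b. g (p * b + q))"
      using sum.shift_bounds_nat_ivl[of g 0 "p * b" b]
      by (simp add: atLeast0LessThan add.commute)
  qed
  finally show ?thesis .
qed

lemma mult_add_less_mult_nat:
  fixes p q a b :: nat
  assumes "p < a" "q < b"
  shows "p * b + q < a * b"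
proof -
  have "p * b + q < Suc p * b" using \<open>q < b\<close> by simp
  also have "\<dots> \<le> a * b" by (rule mult_le_mono1) (use \<open>p < a\<close> in simp)
  finally show ?thesis .
qed

lemma mod_mult_div_nat: "(i::nat) mod (b * c) div c = i div c mod b"
  by (cases "c = 0") (simp_all add: mod_mult2_eq mult.commute[of b c])

lemma dim_kron [simp]:
  "dim_row (kron A B) = dim_row A * dim_row B"
  "dim_col (kron A B) = dim_col A * dim_col B"
  by (simp_all add: kron_def)

lemma kron_carrier_mat:
  "A \<in> carrier_mat a a' \<Longrightarrow> B \<in> carrier_mat b b' \<Longrightarrow> kron A B \<in> carrier_mat (a * b) (a' * b')"
  unfolding carrier_mat_def by simp

lemma index_kron:
  assumes "i < dim_row A * dim_row B" "j < dim_col A * dim_col B"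
  shows "kron A B $$ (i, j) =
    A $$ (i div dim_row B, j div dim_col B) * B $$ (i mod dim_row B, j mod dim_col B)"
  using assms by (simp add: kron_def)

lemma index_kron_mult_add:
  assumes "A \<in> carrier_mat a a'" "B \<in> carrier_mat b b'"
    and "p < a" "q < b" "p' < a'" "q' < b'"
  shows "kron A B $$ (p * b + q, p' * b' + q') = A $$ (p, p') * B $$ (q, q')"
  using assms mult_add_less_mult_nat[of p a q b] mult_add_less_mult_nat[of p' a' q' b']
  by (simp add: index_kron)

lemma kron_assoc: "kron (kron A B) C = kron A (kron B C)"
proof (rule eq_matI)
  let ?rB = "dim_row B" and ?rC = "dim_row C" and ?cB = "dim_col B" and ?cC = "dim_col C"
  fix i j
  assume "i < dim_row (kron A (kron B C))" "j < dim_col (kron A (kron B C))"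
  then have i: "i < dim_row A * ?rB * ?rC" and j: "j < dim_col A * ?cB * ?cC"
    by (simp_all add: mult.assoc)
  then have "0 < ?rB * ?rC" "0 < ?cB * ?cC"
    by (metis gr0I mult.assoc mult_0_right not_less_zero)+
  then have "kron A (kron B C) $$ (i, j) =
      A $$ (i div (?rB * ?rC), j div (?cB * ?cC)) *
      (B $$ (i mod (?rB * ?rC) div ?rC, j mod (?cB * ?cC) div ?cC) *
       C $$ (i mod (?rB * ?rC) mod ?rC, j mod (?cB * ?cC) mod ?cC))"
    using i j by (simp add: index_kron mult.assoc)
  also have "\<dots> = A $$ (i div ?rC div ?rB, j div ?cC div ?cB) *
      B $$ (i div ?rC mod ?rB, j div ?cC mod ?cB) * C $$ (i mod ?rC, j mod ?cC)"
  proof -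
    have "i div (?rB * ?rC) = i div ?rC div ?rB" "j div (?cB * ?cC) = j div ?cC div ?cB"
      by (metis div_mult2_eq mult.commute)+
    moreover have "i mod (?rB * ?rC) mod ?rC = i mod ?rC" "j mod (?cB * ?cC) mod ?cC = j mod ?cC"
      by (simp_all add: mod_mod_cancel)
    ultimately show ?thesis
      by (simp only: mod_mult_div_nat mult.assoc)
  qed
  also have "\<dots> = kron (kron A B) C $$ (i, j)"
    using i j by (simp add: index_kron less_mult_imp_div_less)
  finally show "kron (kron A B) C $$ (i, j) = kron A (kron B C) $$ (i, j)" ..
qed (simp_all add: mult.assoc)

lemma tr_kron:
  assumes "A \<in> carrier_mat a a" "B \<in> carrier_mat b b"
  shows "tr (kron A B) = tr A * tr B"
proof -
  have "tr (kron A B) = (\<Sum>p<a. \<Sum>q<b. kron A B $$ (p * b + q, p * b + q))"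
    using assms by (simp add: tr_def sum_lessThan_mult_nat)
  also have "\<dots> = (\<Sum>p<a. \<Sum>q<b. A $$ (p, p) * B $$ (q, q))"
    using index_kron_mult_add[OF assms] by simp
  also have "\<dots> = tr A * tr B"
    using assms by (simp add: tr_def sum_product)
  finally show ?thesis .
qed

lemma ptrace_mid_index_less:
  fixes i y :: nat
  assumes "i < dX * dZ" "y < dY"
  shows "(i div dZ * dY + y) * dZ + i mod dZ < dX * dY * dZ"
proof -
  have "0 < dZ" using assms(1) by (cases dZ) auto
  have "i div dZ < dX" using assms(1) by (simp add: less_mult_imp_div_less)
  then have "i div dZ * dY + y < dX * dY" using assms(2) by (rule mult_add_less_mult_nat)
  then show ?thesis using \<open>0 < dZ\<close> by (simp add: mult_add_less_mult_nat)
qed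

lemma ptrace_mid_lincomb:
  fixes f :: "'a \<Rightarrow> complex" and M :: "'a \<Rightarrow> complex mat"
  assumes "i < dX * dZ" "j < dX * dZ"
  shows "ptrace_mid dX dY dZ (mat (dX * dY * dZ) (dX * dY * dZ) (\<lambda>rc. \<Sum>x\<in>S. f x * M x $$ rc)) $$ (i, j)
       = (\<Sum>x\<in>S. f x * ptrace_mid dX dY dZ (M x) $$ (i, j))"
proof -
  let ?row = "\<lambda>i y. (i div dZ * dY + y) * dZ + i mod dZ"
  have "ptrace_mid dX dY dZ (mat (dX * dY * dZ) (dX * dY * dZ) (\<lambda>rc. \<Sum>x\<in>S. f x * M x $$ rc)) $$ (i, j)
      = (\<Sum>y<dY. \<Sum>x\<in>S. f x * M x $$ (?row i y, ?row j y))"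
    using assms ptrace_mid_index_less[OF assms(1)] ptrace_mid_index_less[OF assms(2)]
    by (simp add: ptrace_mid_def)
  also have "\<dots> = (\<Sum>x\<in>S. f x * (\<Sum>y<dY. M x $$ (?row i y, ?row j y)))"
    by (simp add: sum_distrib_left sum.swap[of _ "{..<dY}"])
  also have "\<dots> = (\<Sum>x\<in>S. f x * ptrace_mid dX dY dZ (M x) $$ (i, j))"
    using assms by (simp add: ptrace_mid_def)
  finally show ?thesis .
qed

lemma ptrace_mid_kron:
  assumes X: "X \<in> carrier_mat dX dX" and Y: "Y \<in> carrier_mat dY dY" and Z: "Z \<in> carrier_mat dZ dZ"
  shows "ptrace_mid dX dY dZ (kron (kron X Y) Z) = tr Y \<cdot>\<^sub>m kron X Z"
proof (rule eq_matI)
  fix i j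
  assume "i < dim_row (tr Y \<cdot>\<^sub>m kron X Z)" "j < dim_col (tr Y \<cdot>\<^sub>m kron X Z)"
  then have i: "i < dX * dZ" and j: "j < dX * dZ" using X Z by auto
  then have "0 < dZ" by (cases dZ) auto
  then have q: "i div dZ < dX" "j div dZ < dX" "i mod dZ < dZ" "j mod dZ < dZ"
    using i j by (simp_all add: less_mult_imp_div_less)
  let ?x = "X $$ (i div dZ, j div dZ)" and ?z = "Z $$ (i mod dZ, j mod dZ)"
  have "kron (kron X Y) Z $$ ((i div dZ * dY + y) * dZ + i mod dZ, (j div dZ * dY + y) * dZ + j mod dZ)
      = ?x * Y $$ (y, y) * ?z" if "y < dY" for y
    using q that mult_add_less_mult_nat[of _ dX y dY]
    by (simp add: index_kron_mult_add[OF kron_carrier_mat[OF X Y] Z] index_kron_mult_add[OF X Y])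
  then have "ptrace_mid dX dY dZ (kron (kron X Y) Z) $$ (i, j) = (\<Sum>y<dY. ?x * Y $$ (y, y) * ?z)"
    using i j by (simp add: ptrace_mid_def)
  also have "\<dots> = tr Y * (?x * ?z)"
    using Y by (simp add: tr_def sum_distrib_left sum_distrib_right mult_ac)
  also have "\<dots> = (tr Y \<cdot>\<^sub>m kron X Z) $$ (i, j)"
    using X Z i j q by (simp add: index_kron)
  finally show "ptrace_mid dX dY dZ (kron (kron X Y) Z) $$ (i, j) = (tr Y \<cdot>\<^sub>m kron X Z) $$ (i, j)" .
qed (use X Z in \<open>simp_all add: ptrace_mid_def\<close>)

lemma ptrace_mid_kron_kron_kron:
  assumes "A \<in> carrier_mat a a" "B \<in> carrier_mat b b" "C \<in> carrier_mat c c" "D \<in> carrier_mat d d"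
  shows "ptrace_mid a (b * c) d (kron (kron (kron A B) C) D) = (tr B * tr C) \<cdot>\<^sub>m kron A D"
  using ptrace_mid_kron[OF assms(1) kron_carrier_mat[OF assms(2,3)] assms(4)]
  by (simp add: kron_assoc tr_kron[OF assms(2,3)])

lemma sigma_carrier_mat: "sigma k \<in> carrier_mat 2 2"
  unfolding carrier_mat_def by (simp add: sigma_def mat_of_rows_list_def)

lemma tr_sigma: "tr (sigma k) = (if k \<in> {1, 2, 3} then 0 else 2)"
  by (auto simp: tr_def sigma_def mat_of_rows_list_def numeral_2_eq_2 lessThan_Suc)

lemma pauli_Cons: "pauli (k # ps) = kron (sigma k) (pauli ps)"
  by (simp add: pauli_def)

lemma pauli_carrier_mat: "pauli ps \<in> carrier_mat (2 ^ length ps) (2 ^ length ps)"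
proof (induction ps)
  case Nil
  show ?case by (simp add: pauli_def)
next
  case (Cons k ps)
  show ?case using kron_carrier_mat[OF sigma_carrier_mat Cons.IH] by (simp add: pauli_Cons)
qed

lemma pauli_strings_carrier_mat:
  "ps \<in> pauli_strings n \<Longrightarrow> pauli ps \<in> carrier_mat (2 ^ n) (2 ^ n)"
  using pauli_carrier_mat[of ps] by (simp add: pauli_strings_def)

lemma tr_pauli:
  assumes "set ps \<subseteq> {0..<4}"
  shows "tr (pauli ps) = (if ps = replicate (length ps) 0 then 2 ^ length ps else 0)"
  using assms
proof (induction ps)
  case Nil
  show ?case by (simp add: pauli_def tr_def)
next
  case (Cons k ps)
  have "tr (pauli (k # ps)) = tr (sigma k) * tr (pauli ps)"
    unfolding pauli_Cons by (rule tr_kron[OF sigma_carrier_mat pauli_carrier_mat])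
  with Cons show ?case by (auto simp: tr_sigma)
qed

lemma finite_pauli_strings: "finite (pauli_strings n)"
proof -
  have "pauli_strings n = {xs. set xs \<subseteq> {0..<4} \<and> length xs = n}"
    by (auto simp: pauli_strings_def)
  then show ?thesis by (simp add: finite_lists_length_eq)
qed

lemma sum_pauli_strings_tr_pauli:
  "(\<Sum>ps\<in>pauli_strings n. tr (pauli ps) * f ps) = 2 ^ n * f (idp n)"
proof -
  have "tr (pauli ps) * f ps = (if ps = idp n then 2 ^ n * f ps else 0)" if "ps \<in> pauli_strings n" for ps
    using that by (auto simp: pauli_strings_def tr_pauli)
  then have "(\<Sum>ps\<in>pauli_strings n. tr (pauli ps) * f ps)
      = (\<Sum>ps\<in>pauli_strings n. if ps = idp n then 2 ^ n * f ps else 0)"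
    by (rule sum.cong[OF refl])
  also have "\<dots> = 2 ^ n * f (idp n)"
    using finite_pauli_strings[of n] by (simp add: pauli_strings_def set_replicate_conv_if)
  finally show ?thesis .
qed

lemma ptrace_mid_R4:
  assumes r: "r < 2 ^ nA * 2 ^ nB" and c: "c < 2 ^ nA * 2 ^ nB"
  shows "ptrace_mid (2 ^ nA) (2 ^ nB * 2 ^ nA) (2 ^ nB) (R4 nA nB \<rho> \<Phi>) $$ (r, c) =
    1 / 2 ^ (2 * (nA + nB)) *
    (\<Sum>i\<in>pauli_strings nA. \<Sum>j\<in>pauli_strings nB. \<Sum>k\<in>pauli_strings nA. \<Sum>l\<in>pauli_strings nB.
      corr (2 ^ nA * 2 ^ nB) \<rho> \<Phi> (pAB i j) (pAB k l) *
      (tr (pauli j) * tr (pauli k) * kron (pauli i) (pauli l) $$ (r, c)))"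
proof -
  let ?dA = "2 ^ nA :: nat" and ?dB = "2 ^ nB :: nat"
  let ?trB1A2 = "ptrace_mid ?dA (?dB * ?dA) ?dB"
  let ?S = "pauli_strings nA \<times> pauli_strings nB \<times> pauli_strings nA \<times> pauli_strings nB"
  let ?f = "\<lambda>(i, j, k, l). 1 / 2 ^ (2 * (nA + nB)) * corr (?dA * ?dB) \<rho> \<Phi> (pAB i j) (pAB k l)"
  let ?K = "\<lambda>(i, j, k, l). kron (kron (kron (pauli i) (pauli j)) (pauli k)) (pauli l)"
  have "R4 nA nB \<rho> \<Phi> = mat (?dA * (?dB * ?dA) * ?dB) (?dA * (?dB * ?dA) * ?dB) (\<lambda>rc. \<Sum>x\<in>?S. ?f x * ?K x $$ rc)"
    unfolding R4_def Let_def
    by (rule cong_mat) (auto simp: sum.cartesian_product sum_distrib_left mult_ac intro!: sum.cong)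
  then have "?trB1A2 (R4 nA nB \<rho> \<Phi>) $$ (r, c) = (\<Sum>x\<in>?S. ?f x * ?trB1A2 (?K x) $$ (r, c))"
    using ptrace_mid_lincomb[of r ?dA ?dB c] r c by (simp add: mult.commute[of ?dB ?dA])
  also have "\<dots> = (\<Sum>(i, j, k, l)\<in>?S.
      ?f (i, j, k, l) * (tr (pauli j) * tr (pauli k) * kron (pauli i) (pauli l) $$ (r, c)))"
  proof -
    have "?trB1A2 (kron (kron (kron (pauli i) (pauli j)) (pauli k)) (pauli l)) $$ (r, c)
        = tr (pauli j) * tr (pauli k) * kron (pauli i) (pauli l) $$ (r, c)"
      if "i \<in> pauli_strings nA" "j \<in> pauli_strings nB" "k \<in> pauli_strings nA" "l \<in> pauli_strings nB"
      for i j k l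
      using that r c carrier_matD[OF pauli_strings_carrier_mat[OF that(1)]]
        carrier_matD[OF pauli_strings_carrier_mat[OF that(4)]]
      by (simp add: ptrace_mid_kron_kron_kron pauli_strings_carrier_mat)
    then show ?thesis by (intro sum.cong refl) clarsimp
  qed
  finally show ?thesis
    by (simp add: sum.cartesian_product[symmetric] sum_distrib_left mult_ac)
qed

theorem mainTheorem5:
  fixes nA nB :: nat and \<rho> :: "complex mat" and \<P> :: "complex mat \<Rightarrow> complex mat"
  assumes "density (2 ^ nA * 2 ^ nB) \<rho>"
    and "cptp (2 ^ nA * 2 ^ nB) \<P>"
  shows "R2 nA nB \<rho> \<P> = ptrace_mid (2 ^ nA) (2 ^ nB * 2 ^ nA) (2 ^ nB) (R4 nA nB \<rho> \<P>)"
proof (rule eq_matI)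
  let ?trB1A2 = "ptrace_mid (2 ^ nA) (2 ^ nB * 2 ^ nA) (2 ^ nB)"
  let ?corr = "\<lambda>i j k l. corr (2 ^ nA * 2 ^ nB) \<rho> \<P> (pAB i j) (pAB k l)"
  fix r c
  assume "r < dim_row (?trB1A2 (R4 nA nB \<rho> \<P>))" "c < dim_col (?trB1A2 (R4 nA nB \<rho> \<P>))"
  then have r: "r < 2 ^ nA * 2 ^ nB" and c: "c < 2 ^ nA * 2 ^ nB"
    by (simp_all add: ptrace_mid_def)
  have "?trB1A2 (R4 nA nB \<rho> \<P>) $$ (r, c) = 1 / 2 ^ (2 * (nA + nB)) *
      (\<Sum>i\<in>pauli_strings nA. \<Sum>j\<in>pauli_strings nB. tr (pauli j) *
        (\<Sum>k\<in>pauli_strings nA. tr (pauli k) *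
          (\<Sum>l\<in>pauli_strings nB. ?corr i j k l * kron (pauli i) (pauli l) $$ (r, c))))"
    using ptrace_mid_R4[OF r c] by (simp add: sum_distrib_left mult_ac)
  also have "\<dots> = 1 / 2 ^ (2 * (nA + nB)) * (2 ^ nB * 2 ^ nA) *
      (\<Sum>i\<in>pauli_strings nA. \<Sum>l\<in>pauli_strings nB.
        ?corr i (idp nB) (idp nA) l * kron (pauli i) (pauli l) $$ (r, c))"
    by (simp only: sum_pauli_strings_tr_pauli) (simp add: sum_distrib_left mult_ac)
  also have "\<dots> = R2 nA nB \<rho> \<P> $$ (r, c)"
  proof -
    have "1 / 2 ^ (2 * (nA + nB)) * (2 ^ nB * 2 ^ nA) = (1 / 2 ^ (nA + nB) :: complex)"
      by (simp add: mult_2 power_add)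
    then show ?thesis
      using r c by (simp add: R2_def Let_def)
  qed
  finally show "R2 nA nB \<rho> \<P> $$ (r, c) = ?trB1A2 (R4 nA nB \<rho> \<P>) $$ (r, c)" ..
qed (simp_all add: R2_def Let_def ptrace_mid_def)

end
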